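(* Given $x_0\in\mathbb{R}^{n_x}$ and a control $u\in U$, for every $t\in[0,T]$ the map $(y_1,\dots,y_T)\mapsto x(t)$ from $(\mathbb{R}^{n_y})^T$ to $\mathbb{R}^{n_x}$ is continuous, where $x$ denotes the solution of the hybrid system below starting at $x(0)=x_0$.
   Context: Fix positive integers $T,m,n_x,n_y$ and $\rho_{\max}\in(0,\infty)$; $B(0,\rho_{\max})$ is the closed Euclidean ball of radius $\rho_{\max}$ in $\mathbb{R}^m$; $U$ is the set of piecewise continuous $u:[0,T]\to\mathbb{R}^m$ with $\|u(t)\|_2\le\rho_{\max}$ for all $t$. $f:\mathbb{R}^{n_x}\times\mathbb{R}^m\to\mathbb{R}^{n_x}$ is continuously differentiable and there is $K_1\in[1,\infty)$ with $\|f(x',u')-f(x'',u'')\|_2\le K_1(\|x'-x''\|_2+\|u'-u''\|_2)$ for all $x',x''\in\mathbb{R}^{n_x}$, $u',u''\in B(0,\rho_{\max})$. $g:\mathbb{R}^{n_x}\times\mathbb{R}^{n_y}\to\mathbb{R}^{n_x}$ is continuous and differentiable in its first argument, and there are $K_2,\dots,K_5\ge0$ and positive integers $L_1,L_2$ such that for all $x,y$ both $\|g(x,y)\|_2$ and $\|\frac{\partial}{\partial x}g(x,y)\|_2$ are at most $K_2+K_3\|x\|_2^{L_1}+K_4\|y\|_2^{L_2}+K_5\|x\|_2^{L_1}\|y\|_2^{L_2}$. The hybrid system: $x_1$ on $[0,1]$ solves $\dot x_1=f(x_1,u)$, $x_1(0)=x_0$; for $i=2,\dots,T$, $x_i$ on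 $[i-1,i]$ solves $\dot x_i(t)=f(x_i(t),u(t))$ with $x_i(i-1)=g(x_{i-1}(i-1),y_{i-1})$; $x(t)=x_i(t)$ for $t\in[i-1,i)$, $i=1,\dots,T$, and $x(T)=g(x_T(T),y_T)$. *)

theory Defs
  imports "HOL-Analysis.Analysis"
begin

definition piecewise_continuous_on :: "real \<Rightarrow> real \<Rightarrow> (real \<Rightarrow> 'b::topological_space) \<Rightarrow> bool" where
  "piecewise_continuous_on a b u \<longleftrightarrow>
     (\<exists>S. finite S \<and> S \<subseteq> {a..b} \<and> continuous_on ({a..b} - S) u \<and>
        (\<forall>s\<in>S. (a < s \<longrightarrow> (\<exists>l. (u \<longlongrightarrow> l) (at_left s))) \<and>
                 (s < b \<longrightarrow> (\<exists>l. (u \<longlongrightarrow> l) (at_right s)))))"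

definition admissible_controls :: "nat \<Rightarrow> real \<Rightarrow> (real \<Rightarrow> real^'m) set" where
  "admissible_controls T \<rho> =
     {u. piecewise_continuous_on 0 (real T) u \<and> (\<forall>t\<in>{0..real T}. norm (u t) \<le> \<rho>)}"

text \<open>The family xs 1, ..., xs T of arcs of the hybrid system: xs i solves
  dx/dt = f(x,u) on [i-1,i] (in integral / Caratheodory form, as u is only piecewise
  continuous), xs 1 (0) = x0, and xs i (i-1) = g (xs (i-1) (i-1)) (y (i-1)).\<close>
definition hybrid_arcs ::
  "(real^'nx \<Rightarrow> real^'m \<Rightarrow> real^'nx) \<Rightarrow> (real^'nx \<Rightarrow> real^'ny \<Rightarrow> real^'nx) \<Rightarrow> nat \<Rightarrow>
   real^'nx \<Rightarrow> (real \<Rightarrow> real^'m) \<Rightarrow> (nat \<Rightarrow> real^'ny) \<Rightarrow> (nat \<Rightarrow> real \<Rightarrow> real^'nx) \<Rightarrow> bool" where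
  "hybrid_arcs f g T x0 u y xs \<longleftrightarrow>
     (\<forall>i\<in>{1..T}. continuous_on {real i - 1..real i} (xs i) \<and>
        (\<forall>t\<in>{real i - 1..real i}.
           ((\<lambda>s. f (xs i s) (u s)) has_integral (xs i t - xs i (real i - 1))) {real i - 1..t})) \<and>
     xs 1 0 = x0 \<and>
     (\<forall>i\<in>{2..T}. xs i (real i - 1) = g (xs (i - 1) (real i - 1)) (y (i - 1)))"

definition hybrid_state_of ::
  "(real^'nx \<Rightarrow> real^'ny \<Rightarrow> real^'nx) \<Rightarrow> nat \<Rightarrow> (nat \<Rightarrow> real^'ny) \<Rightarrow>
   (nat \<Rightarrow> real \<Rightarrow> real^'nx) \<Rightarrow> real \<Rightarrow> real^'nx" where
  "hybrid_state_of g T y xs t =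
     (if t = real T then g (xs T (real T)) (y T) else xs (nat \<lfloor>t\<rfloor> + 1) t)"

definition hybrid_solution ::
  "(real^'nx \<Rightarrow> real^'m \<Rightarrow> real^'nx) \<Rightarrow> (real^'nx \<Rightarrow> real^'ny \<Rightarrow> real^'nx) \<Rightarrow> nat \<Rightarrow>
   real^'nx \<Rightarrow> (real \<Rightarrow> real^'m) \<Rightarrow> (nat \<Rightarrow> real^'ny) \<Rightarrow> real \<Rightarrow> real^'nx" where
  "hybrid_solution f g T x0 u y t =
     (THE v. \<exists>xs. hybrid_arcs f g T x0 u y xs \<and> v = hybrid_state_of g T y xs t)"

end

theory Submission
  imports Defs
begin

(*
  On each interval [k, k + 1] the ODE is driven by a fixed bounded control and f is globally
  Lipschitz in the state, so its Caratheodory (integral) form has a unique solution for every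
  initial state. It is the fixed point of the Picard operator, which becomes a contraction after
  rescaling by the Bielecki weight exp (2 K (t - k)); the same estimate shows that the solution
  at time t is Lipschitz in the initial state. The hybrid trajectory is therefore obtained by
  alternating these flows with the jump maps g (-, y_i), so x(t) is a finite composition of
  continuous functions of (y_1, ..., y_T).
*)

lemma ext_cont_in_bcontfun:
  fixes h :: "'a::euclidean_space \<Rightarrow> 'b::metric_space"
  assumes "continuous_on (cbox a b) h"
  shows "ext_cont h a b \<in> bcontfun"
  by (auto intro!: continuous_on_ext_cont simp: bcontfun_def assms)
    (auto simp: ext_cont_def intro!: clamp_bounded compact_imp_bounded[OF compact_continuous_image] assms)

lemma clamp_in_interval_real: "(a::real) \<le> b \<Longrightarrow> clamp a b t \<in> {a..b}"
  using clamp_in_interval[of a b t] by simp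

lemma clamp_cancel_real: "(t::real) \<in> {a..b} \<Longrightarrow> clamp a b t = t"
  using clamp_cancel_cbox[of t a b] by simp

definition caratheodory_solution ::
  "('a::real_normed_vector \<Rightarrow> 'b \<Rightarrow> 'a) \<Rightarrow> (real \<Rightarrow> 'b) \<Rightarrow> real \<Rightarrow> real \<Rightarrow> (real \<Rightarrow> 'a) \<Rightarrow> bool" where
  "caratheodory_solution f u a b x \<longleftrightarrow> continuous_on {a..b} x \<and>
     (\<forall>t\<in>{a..b}. ((\<lambda>s. f (x s) (u s)) has_integral (x t - x a)) {a..t})"

definition caratheodory_flow ::
  "('a::real_normed_vector \<Rightarrow> 'b \<Rightarrow> 'a) \<Rightarrow> (real \<Rightarrow> 'b) \<Rightarrow> real \<Rightarrow> real \<Rightarrow> ('a \<Rightarrow> real \<Rightarrow> 'a) \<Rightarrow> bool" where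
  "caratheodory_flow f u a b \<phi> \<longleftrightarrow>
     (\<forall>z. caratheodory_solution f u a b (\<phi> z) \<and> \<phi> z a = z) \<and>
     (\<forall>x. caratheodory_solution f u a b x \<longrightarrow> (\<forall>t\<in>{a..b}. x t = \<phi> (x a) t))"

locale lipschitz_caratheodory_ode =
  fixes f :: "'a::euclidean_space \<Rightarrow> 'b \<Rightarrow> 'a" and u :: "real \<Rightarrow> 'b" and a b K :: real
  assumes K_pos: "0 < K" and a_le_b: "a \<le> b"
    and lipschitz: "\<And>s. s \<in> {a..b} \<Longrightarrow> K-lipschitz_on UNIV (\<lambda>x. f x (u s))"
    and integrable: "\<And>x. continuous_on {a..b} x \<Longrightarrow> (\<lambda>s. f (x s) (u s)) integrable_on {a..b}"
begin

definition weight :: "real \<Rightarrow> real" where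
  "weight t = exp (2 * K * (t - a))"

lemma weight_pos: "0 < weight t"
  by (simp add: weight_def)

lemma weight_ge_1: "a \<le> t \<Longrightarrow> 1 \<le> weight t"
  using K_pos by (simp add: weight_def)

lemma continuous_on_weight: "continuous_on S weight"
  unfolding weight_def by (intro continuous_intros)

lemma has_integral_weight: "a \<le> t \<Longrightarrow> (weight has_integral (weight t - 1) / (2 * K)) {a..t}"
proof -
  assume "a \<le> t"
  then have "(weight has_integral (weight t / (2 * K) - weight a / (2 * K))) {a..t}"
    using K_pos
    by (intro fundamental_theorem_of_calculus)
      (auto simp: weight_def has_real_derivative_iff_has_vector_derivative[symmetric]
        intro!: derivative_eq_intros)
  then show ?thesis
    by (simp add: weight_def diff_divide_distrib)
qed

text \<open>The Picard operator acts on the rescaled unknown \<open>w = x / weight\<close> (Bielecki's trick), which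
  makes it a contraction however long \<open>[a, b]\<close> is. Its values are extended constantly outside
  \<open>[a, b]\<close> so that it acts on bounded continuous functions on the whole line.\<close>

definition picard_integrand :: "(real \<Rightarrow>\<^sub>C 'a) \<Rightarrow> real \<Rightarrow> 'a" where
  "picard_integrand w s = f (weight s *\<^sub>R w s) (u s)"

definition picard_rhs :: "'a \<Rightarrow> (real \<Rightarrow>\<^sub>C 'a) \<Rightarrow> real \<Rightarrow> 'a" where
  "picard_rhs z w t = (1 / weight t) *\<^sub>R (z + integral {a..t} (picard_integrand w))"

definition picard :: "'a \<Rightarrow> (real \<Rightarrow>\<^sub>C 'a) \<Rightarrow> real \<Rightarrow>\<^sub>C 'a" where
  "picard z w = Bcontfun (ext_cont (picard_rhs z w) a b)"

lemma integrable_picard_integrand: "d \<le> b \<Longrightarrow> picard_integrand w integrable_on {a..d}"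
  unfolding picard_integrand_def
  by (rule integrable_on_subinterval[OF integrable])
    (auto intro!: continuous_intros continuous_on_weight)

lemma picard_apply: "picard z w t = picard_rhs z w (clamp a b t)"
proof -
  have cont: "continuous_on (cbox a b) (picard_rhs z w)"
    unfolding picard_rhs_def using weight_pos
    by (auto intro!: continuous_intros continuous_on_weight indefinite_integral_continuous_1
        integrable_picard_integrand simp: less_imp_neq[symmetric])
  show ?thesis
    using Bcontfun_inverse[OF ext_cont_in_bcontfun[OF cont]] unfolding picard_def ext_cont_def by simp
qed

lemma norm_integral_picard_integrand_diff_le:
  assumes "a \<le> t" "t \<le> b"
  shows "norm (integral {a..t} (picard_integrand w) - integral {a..t} (picard_integrand w'))
    \<le> dist w w' / 2 * (weight t - 1)"
proof -
  define D where "D = dist w w'"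
  have integrand_diff: "norm (picard_integrand w s - picard_integrand w' s) \<le> K * D * weight s"
    if "s \<in> {a..t}" for s
  proof -
    have "norm (picard_integrand w s - picard_integrand w' s)
        \<le> K * dist (weight s *\<^sub>R w s) (weight s *\<^sub>R w' s)"
      using lipschitz_onD[OF lipschitz] that assms by (simp add: picard_integrand_def dist_norm)
    also have "\<dots> = K * (weight s * dist (w s) (w' s))"
      using weight_pos[of s] by (simp add: dist_norm flip: scaleR_diff_right)
    also have "\<dots> \<le> K * (weight s * D)"
      using K_pos weight_pos[of s] dist_bounded[of w s w'] by (simp add: D_def)
    finally show ?thesis
      by (simp add: mult_ac)
  qed
  have weight_int: "((\<lambda>s. K * D * weight s) has_integral K * D * ((weight t - 1) / (2 * K))) {a..t}"
    using has_integral_weight[OF assms(1)] by (rule has_integral_mult_right)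
  have int: "picard_integrand v integrable_on {a..t}" for v
    using assms(2) by (rule integrable_picard_integrand)
  have "norm (integral {a..t} (picard_integrand w) - integral {a..t} (picard_integrand w'))
      \<le> integral {a..t} (\<lambda>s. K * D * weight s)"
    unfolding integral_diff[OF int int, symmetric]
    using int integrand_diff weight_int by (intro integral_norm_bound_integral integrable_diff) auto
  also have "\<dots> = D / 2 * (weight t - 1)"
    using integral_unique[OF weight_int] K_pos by simp
  finally show ?thesis
    by (simp add: D_def)
qed

lemma dist_picard_le: "dist (picard z w) (picard z' w') \<le> dist z z' + dist w w' / 2"
proof (rule dist_bound)
  fix t
  define \<tau> where "\<tau> = clamp a b t"
  define I where "I v = integral {a..\<tau>} (picard_integrand v)" for v
  define D where "D = dist w w'"
  have D_nonneg: "0 \<le> D"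
    by (simp add: D_def)
  have \<tau>: "a \<le> \<tau>" "\<tau> \<le> b"
    using clamp_in_interval_real[OF a_le_b] by (auto simp: \<tau>_def)
  have "dist (picard z w t) (picard z' w' t) = norm ((z - z') + (I w - I w')) / weight \<tau>"
    using weight_pos[of \<tau>]
    unfolding picard_apply picard_rhs_def \<tau>_def[symmetric] I_def[symmetric] dist_norm
      scaleR_diff_right[symmetric] norm_scaleR
    by (simp add: algebra_simps)
  also have "\<dots> \<le> (norm (z - z') + D / 2 * (weight \<tau> - 1)) / weight \<tau>"
    using weight_pos[of \<tau>] norm_integral_picard_integrand_diff_le[OF \<tau>, of w w']
      norm_triangle_ineq[of "z - z'" "I w - I w'"]
    by (intro divide_right_mono) (auto simp: I_def D_def)
  also have "\<dots> \<le> norm (z - z') + D / 2"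
  proof -
    have "norm (z - z') + D / 2 * (weight \<tau> - 1) \<le> (norm (z - z') + D / 2) * weight \<tau>"
      using mult_right_mono[OF weight_ge_1[OF \<tau>(1)] norm_ge_zero[of "z - z'"]] D_nonneg
      by (simp add: algebra_simps)
    then show ?thesis
      using weight_pos[of \<tau>] by (simp add: divide_le_eq)
  qed
  finally show "dist (picard z w t) (picard z' w' t) \<le> dist z z' + dist w w' / 2"
    by (simp add: D_def dist_norm)
qed

lemma picard_unique_fixed_point: "\<exists>!w. picard z w = w"
  by (rule banach_fix_type[where c = "1 / 2"]) (use dist_picard_le[of z _ z] in auto)

definition picard_fix :: "'a \<Rightarrow> real \<Rightarrow>\<^sub>C 'a" where
  "picard_fix z = (THE w. picard z w = w)"

lemma picard_picard_fix: "picard z (picard_fix z) = picard_fix z"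
  unfolding picard_fix_def by (rule theI'[OF picard_unique_fixed_point])

lemma picard_fix_unique: "picard z w = w \<Longrightarrow> w = picard_fix z"
  unfolding picard_fix_def by (rule the1_equality[OF picard_unique_fixed_point, symmetric])

definition flow :: "'a \<Rightarrow> real \<Rightarrow> 'a" where
  "flow z t = weight t *\<^sub>R picard_fix z t"

lemma continuous_on_flow: "continuous_on S (flow z)"
  unfolding flow_def by (intro continuous_intros continuous_on_weight continuous_on_apply_bcontfun)

lemma flow_eq_integral: "t \<in> {a..b} \<Longrightarrow> flow z t = z + integral {a..t} (\<lambda>s. f (flow z s) (u s))"
  using weight_pos[of t] picard_apply[of z "picard_fix z" t]
  by (simp add: picard_picard_fix flow_def[abs_def] picard_rhs_def picard_integrand_def[abs_def]
      clamp_cancel_real)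

lemma flow_start: "flow z a = z"
  using flow_eq_integral[of a z] a_le_b by simp

lemma caratheodory_solution_flow: "caratheodory_solution f u a b (flow z)"
  unfolding caratheodory_solution_def
proof (intro conjI ballI continuous_on_flow)
  fix t assume t: "t \<in> {a..b}"
  have "(\<lambda>s. f (flow z s) (u s)) integrable_on {a..t}"
    using t by (intro integrable_on_subinterval[OF integrable[OF continuous_on_flow]]) auto
  then show "((\<lambda>s. f (flow z s) (u s)) has_integral flow z t - flow z a) {a..t}"
    using flow_eq_integral[OF t] by (simp add: flow_start integrable_integral)
qed

lemma caratheodory_solution_eq_flow:
  assumes x: "caratheodory_solution f u a b x" and t: "t \<in> {a..b}"
  shows "x t = flow (x a) t"
proof -
  have x_cont: "continuous_on (cbox a b) (\<lambda>s. (1 / weight s) *\<^sub>R x s)"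
    using x weight_pos
    by (auto simp: caratheodory_solution_def less_imp_neq[symmetric]
        intro!: continuous_intros continuous_on_weight)
  define w where "w = Bcontfun (ext_cont (\<lambda>s. (1 / weight s) *\<^sub>R x s) a b)"
  have w: "w s = (1 / weight (clamp a b s)) *\<^sub>R x (clamp a b s)" for s
    using Bcontfun_inverse[OF ext_cont_in_bcontfun[OF x_cont]] by (simp add: w_def ext_cont_def)
  have weight_w: "weight s *\<^sub>R w s = x s" if "s \<in> {a..b}" for s
    using weight_pos[of s] by (simp add: w clamp_cancel_real[OF that])
  have "picard (x a) w = w"
  proof (rule bcontfun_eqI)
    fix s
    define \<tau> where "\<tau> = clamp a b s"
    have \<tau>: "\<tau> \<in> {a..b}"
      unfolding \<tau>_def using a_le_b by (rule clamp_in_interval_real)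
    have "integral {a..\<tau>} (picard_integrand w) = integral {a..\<tau>} (\<lambda>r. f (x r) (u r))"
      using \<tau> by (intro integral_cong) (simp add: picard_integrand_def weight_w)
    also have "\<dots> = x \<tau> - x a"
      using x \<tau> by (auto simp: caratheodory_solution_def intro: integral_unique)
    finally show "picard (x a) w s = w s"
      by (simp add: picard_apply picard_rhs_def w \<tau>_def[symmetric])
  qed
  then have "w = picard_fix (x a)"
    by (rule picard_fix_unique)
  then show ?thesis
    using weight_w[OF t] by (simp add: flow_def)
qed

lemma caratheodory_flow_flow: "caratheodory_flow f u a b flow"
  unfolding caratheodory_flow_def
  using caratheodory_solution_flow flow_start caratheodory_solution_eq_flow by blast

lemma lipschitz_on_flow:
  assumes t: "t \<in> {a..b}"
  shows "(2 * exp (2 * K * (b - a)))-lipschitz_on UNIV (\<lambda>z. flow z t)"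
proof (rule lipschitz_onI)
  fix z z' :: 'a
  have "dist (picard_fix z) (picard_fix z') \<le> dist z z' + dist (picard_fix z) (picard_fix z') / 2"
    using dist_picard_le[of z "picard_fix z" z' "picard_fix z'"] by (simp add: picard_picard_fix)
  then have fix_le: "dist (picard_fix z t) (picard_fix z' t) \<le> 2 * dist z z'"
    using dist_bounded[of "picard_fix z" t "picard_fix z'"] by simp
  have "dist (flow z t) (flow z' t) = weight t * dist (picard_fix z t) (picard_fix z' t)"
    using weight_pos[of t] by (simp add: flow_def dist_norm flip: scaleR_diff_right)
  also have "\<dots> \<le> exp (2 * K * (b - a)) * (2 * dist z z')"
    using t K_pos weight_pos[of t] fix_le by (intro mult_mono) (auto simp: weight_def)
  finally show "dist (flow z t) (flow z' t) \<le> 2 * exp (2 * K * (b - a)) * dist z z'"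
    by simp
qed simp

end

lemma integrable_on_continuous_comp_piecewise:
  fixes f :: "'a::euclidean_space \<Rightarrow> 'b::euclidean_space \<Rightarrow> 'c::euclidean_space" and c d :: real
  assumes f: "continuous_on UNIV (\<lambda>(x, v). f x v)"
    and x: "continuous_on {c..d} x"
    and S: "finite S" "continuous_on ({c..d} - S) u"
    and u_bounded: "bounded (u ` {c..d})"
  shows "(\<lambda>s. f (x s) (u s)) integrable_on {c..d}"
proof -
  have cont: "continuous_on ({c..d} - S) (\<lambda>s. f (x s) (u s))"
    using continuous_on_compose2[OF f continuous_on_Pair[OF continuous_on_subset[OF x] S(2)]]
    by auto
  define P where "P = x ` {c..d} \<times> closure (u ` {c..d})"
  have "compact P"
    unfolding P_def using u_bounded by (intro compact_Times compact_continuous_image x compact_Icc) auto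
  then have "bounded ((\<lambda>(x, v). f x v) ` P)"
    by (intro compact_imp_bounded compact_continuous_image continuous_on_subset[OF f]) auto
  then obtain B where B: "\<forall>q \<in> (\<lambda>(x, v). f x v) ` P. norm q \<le> B"
    unfolding bounded_iff by blast
  have fB: "norm (f (x s) (u s)) \<le> B" if "s \<in> {c..d}" for s
  proof -
    have "(x s, u s) \<in> P"
      using that closure_subset[of "u ` {c..d}"] by (auto simp: P_def)
    then show ?thesis
      using B by fastforce
  qed
  have meas: "{c..d} - S \<in> sets lebesgue"
    using S(1) by (intro sets.Diff) (auto intro: negligible_imp_sets)
  have "(\<lambda>s. f (x s) (u s)) absolutely_integrable_on {c..d} - S"
    by (rule measurable_bounded_by_integrable_imp_absolutely_integrable[OF
          continuous_imp_measurable_on_sets_lebesgue[OF cont meas] meas, of "\<lambda>_. B"])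
      (use fB meas in \<open>auto intro!: integrable_on_const bounded_set_imp_lmeasurable
        bounded_subset[OF bounded_closed_interval[of c d]]\<close>)
  then have "(\<lambda>s. f (x s) (u s)) integrable_on {c..d} - S"
    using absolutely_integrable_on_def by blast
  moreover have "negligible (({c..d} - S - {c..d}) \<union> ({c..d} - ({c..d} - S)))"
    by (rule negligible_subset[of S]) (use S(1) in auto)
  ultimately show ?thesis
    using integrable_spike_set_eq by blast
qed

lemma lipschitz_caratheodory_ode_admissible:
  fixes f :: "'a::euclidean_space \<Rightarrow> real^'m \<Rightarrow> 'a"
  assumes f_cont: "continuous_on UNIV (\<lambda>(x, v). f x v)" and K: "0 < K"
    and f_lip: "\<And>x x' v. norm v \<le> \<rho> \<Longrightarrow> dist (f x v) (f x' v) \<le> K * dist x x'"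
    and u: "u \<in> admissible_controls T \<rho>"
    and ab: "0 \<le> a" "a \<le> b" "b \<le> real T"
  shows "lipschitz_caratheodory_ode f u a b K"
proof
  obtain S where S: "finite S" "continuous_on ({0..real T} - S) u"
    using u by (auto simp: admissible_controls_def piecewise_continuous_on_def)
  have u_le: "norm (u s) \<le> \<rho>" if "s \<in> {a..b}" for s
    using u that ab by (simp add: admissible_controls_def)
  show "0 < K" "a \<le> b"
    using K ab by simp_all
  show "K-lipschitz_on UNIV (\<lambda>x. f x (u s))" if "s \<in> {a..b}" for s
    using f_lip[OF u_le[OF that]] K by (intro lipschitz_onI) simp_all
  have "bounded (u ` {a..b})"
    unfolding bounded_iff using u_le by (intro exI[of _ \<rho>]) auto
  then show "(\<lambda>s. f (x s) (u s)) integrable_on {a..b}" if "continuous_on {a..b} x" for x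
    using ab by (intro integrable_on_continuous_comp_piecewise[OF f_cont that S(1)]
        continuous_on_subset[OF S(2)]) auto
qed

text \<open>Arc \<open>k\<close> lives on \<open>[k, k + 1]\<close>: it is the arc \<open>x\<^sub>k\<^sub>+\<^sub>1\<close> of the hybrid system, obtained
  by running the flow \<open>\<phi> k\<close> from the state after the \<open>k\<close>-th jump.\<close>

primrec arcs_of_flows ::
  "(nat \<Rightarrow> 'x \<Rightarrow> real \<Rightarrow> 'x) \<Rightarrow> ('x \<Rightarrow> 'y \<Rightarrow> 'x) \<Rightarrow> 'x \<Rightarrow> (nat \<Rightarrow> 'y) \<Rightarrow> nat \<Rightarrow> real \<Rightarrow> 'x" where
  "arcs_of_flows \<phi> g \<xi> y 0 = \<phi> 0 \<xi>"
| "arcs_of_flows \<phi> g \<xi> y (Suc k) = \<phi> (Suc k) (g (arcs_of_flows \<phi> g \<xi> y k (Suc k)) (y (Suc k)))"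

lemma hybrid_arcs_iff:
  "hybrid_arcs f g T \<xi> u y xs \<longleftrightarrow>
     (\<forall>k<T. caratheodory_solution f u (real k) (real k + 1) (xs (Suc k))) \<and> xs 1 0 = \<xi> \<and>
     (\<forall>k. Suc k < T \<longrightarrow> xs (Suc (Suc k)) (Suc k) = g (xs (Suc k) (Suc k)) (y (Suc k)))"
proof -
  have index_from_1: "(\<forall>i\<in>{1..T}. P i) \<longleftrightarrow> (\<forall>k<T. P (Suc k))" for P
  proof (intro iffI ballI allI impI)
    fix i assume "\<forall>k<T. P (Suc k)" "i \<in> {1..T}"
    then show "P i"
      by (cases i) auto
  qed auto
  have index_from_2: "(\<forall>i\<in>{2..T}. P i) \<longleftrightarrow> (\<forall>k. Suc k < T \<longrightarrow> P (Suc (Suc k)))" for P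
  proof (intro iffI ballI allI impI)
    fix i assume "\<forall>k. Suc k < T \<longrightarrow> P (Suc (Suc k))" "i \<in> {2..T}"
    moreover obtain k where "i = 2 + k"
      using le_Suc_ex[of 2 i] \<open>i \<in> {2..T}\<close> by auto
    ultimately show "P i"
      by auto
  qed auto
  show ?thesis
    unfolding hybrid_arcs_def caratheodory_solution_def index_from_1 index_from_2 by (simp add: add.commute)
qed

lemma hybrid_arcs_arcs_of_flows:
  assumes "0 < T" and flows: "\<forall>k<T. caratheodory_flow f u (real k) (real k + 1) (\<phi> k)"
  shows "hybrid_arcs f g T \<xi> u y (\<lambda>i. arcs_of_flows \<phi> g \<xi> y (i - 1))"
proof -
  have sol: "caratheodory_solution f u (real k) (real k + 1) (\<phi> k z)" and start: "\<phi> k z k = z"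
    if "k < T" for k z
    using flows that unfolding caratheodory_flow_def by blast+
  show ?thesis
    unfolding hybrid_arcs_iff
  proof (intro conjI allI impI)
    fix k assume "k < T"
    obtain z where "arcs_of_flows \<phi> g \<xi> y k = \<phi> k z"
      by (cases k) auto
    then show "caratheodory_solution f u (real k) (real k + 1) (arcs_of_flows \<phi> g \<xi> y (Suc k - 1))"
      using sol[OF \<open>k < T\<close>] by simp
  next
    show "arcs_of_flows \<phi> g \<xi> y (1 - 1) 0 = \<xi>"
      using start[OF \<open>0 < T\<close>, of \<xi>] by simp
  next
    fix k assume "Suc k < T"
    then show "arcs_of_flows \<phi> g \<xi> y (Suc (Suc k) - 1) (Suc k) =
        g (arcs_of_flows \<phi> g \<xi> y (Suc k - 1) (Suc k)) (y (Suc k))"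
      using start[OF \<open>Suc k < T\<close>] by simp
  qed
qed

lemma hybrid_arcs_eq_arcs_of_flows:
  assumes flows: "\<forall>k<T. caratheodory_flow f u (real k) (real k + 1) (\<phi> k)"
    and xs: "hybrid_arcs f g T \<xi> u y xs"
    and "k < T" "s \<in> {real k..real k + 1}"
  shows "xs (Suc k) s = arcs_of_flows \<phi> g \<xi> y k s"
proof -
  have unique: "x s = \<phi> k (x k) s"
    if "k < T" "caratheodory_solution f u (real k) (real k + 1) x" "s \<in> {real k..real k + 1}" for k x s
    using flows that unfolding caratheodory_flow_def by blast
  have arcs: "caratheodory_solution f u (real k) (real k + 1) (xs (Suc k))" if "k < T" for k
    using xs that unfolding hybrid_arcs_iff by blast
  have jump: "xs (Suc (Suc k)) (Suc k) = g (xs (Suc k) (Suc k)) (y (Suc k))" if "Suc k < T" for k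
    using xs that unfolding hybrid_arcs_iff by blast
  have init: "xs 1 0 = \<xi>"
    using xs unfolding hybrid_arcs_iff by blast
  show ?thesis
    using assms(3,4)
  proof (induction k arbitrary: s)
    case 0
    then show ?case
      using unique[OF 0(1) arcs[OF 0(1)] 0(2)] init by simp
  next
    case (Suc k)
    have jump_Suc: "xs (Suc (Suc k)) (Suc k) = g (arcs_of_flows \<phi> g \<xi> y k (Suc k)) (y (Suc k))"
      using jump[OF Suc.prems(1)] Suc.IH[of "Suc k"] Suc.prems(1) by simp
    show ?case
      using unique[OF Suc.prems(1) arcs[OF Suc.prems(1)] Suc.prems(2)] unfolding jump_Suc by simp
  qed
qed

lemma floor_interval_index:
  assumes "t \<in> {0..<real T}"
  shows "nat \<lfloor>t\<rfloor> < T" "t \<in> {real (nat \<lfloor>t\<rfloor>)..real (nat \<lfloor>t\<rfloor>) + 1}"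
  using assms by (auto simp: nat_less_iff floor_less_iff)

lemma hybrid_state_of_cong:
  assumes "0 < T" "t \<in> {0..real T}"
    and agree: "\<And>k s. k < T \<Longrightarrow> s \<in> {real k..real k + 1} \<Longrightarrow> xs (Suc k) s = xs' (Suc k) s"
  shows "hybrid_state_of g T y xs t = hybrid_state_of g T y xs' t"
proof (cases "t = real T")
  case True
  obtain m where T: "T = Suc m"
    using \<open>0 < T\<close> gr0_implies_Suc by blast
  have "xs T (real T) = xs' T (real T)"
    using agree[of m "real T"] by (simp add: T)
  then show ?thesis
    by (simp add: hybrid_state_of_def True)
next
  case False
  define k where "k = nat \<lfloor>t\<rfloor>"
  have k: "k < T" "t \<in> {real k..real k + 1}"
    using floor_interval_index[of t T] False \<open>t \<in> {0..real T}\<close> by (auto simp: k_def)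
  show ?thesis
    using agree[OF k] False by (simp add: hybrid_state_of_def k_def)
qed

lemma hybrid_solution_eq_arcs_of_flows:
  assumes "0 < T" "t \<in> {0..real T}" and flows: "\<forall>k<T. caratheodory_flow f u (real k) (real k + 1) (\<phi> k)"
  shows "hybrid_solution f g T \<xi> u y t = hybrid_state_of g T y (\<lambda>i. arcs_of_flows \<phi> g \<xi> y (i - 1)) t"
  unfolding hybrid_solution_def
proof (rule the_equality)
  show "\<exists>xs. hybrid_arcs f g T \<xi> u y xs \<and>
      hybrid_state_of g T y (\<lambda>i. arcs_of_flows \<phi> g \<xi> y (i - 1)) t = hybrid_state_of g T y xs t"
    using hybrid_arcs_arcs_of_flows[OF \<open>0 < T\<close> flows] by blast
next
  fix v assume "\<exists>xs. hybrid_arcs f g T \<xi> u y xs \<and> v = hybrid_state_of g T y xs t"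
  then obtain xs where xs: "hybrid_arcs f g T \<xi> u y xs" "v = hybrid_state_of g T y xs t"
    by blast
  show "v = hybrid_state_of g T y (\<lambda>i. arcs_of_flows \<phi> g \<xi> y (i - 1)) t"
    unfolding xs(2)
  proof (rule hybrid_state_of_cong[OF assms(1,2)])
    fix k s assume "k < T" "s \<in> {real k..real k + 1}"
    then show "xs (Suc k) s = arcs_of_flows \<phi> g \<xi> y (Suc k - 1) s"
      using hybrid_arcs_eq_arcs_of_flows[OF flows xs(1)] by simp
  qed
qed

definition coordwise_nhds :: "nat \<Rightarrow> (nat \<Rightarrow> 'a::metric_space) \<Rightarrow> (nat \<Rightarrow> 'a) filter" where
  "coordwise_nhds T y = (INF \<delta>\<in>{0<..}. principal {y'. \<forall>i\<in>{1..T}. dist (y' i) (y i) < \<delta>})"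

lemma eventually_coordwise_nhds:
  "eventually P (coordwise_nhds T y) \<longleftrightarrow> (\<exists>\<delta>>0. \<forall>y'. (\<forall>i\<in>{1..T}. dist (y' i) (y i) < \<delta>) \<longrightarrow> P y')"
  unfolding coordwise_nhds_def
proof (subst eventually_INF_base)
  fix \<delta> \<delta>' :: real assume "\<delta> \<in> {0<..}" "\<delta>' \<in> {0<..}"
  then show "\<exists>\<delta>''\<in>{0<..}. principal {y'. \<forall>i\<in>{1..T}. dist (y' i) (y i) < \<delta>''} \<le>
      inf (principal {y'. \<forall>i\<in>{1..T}. dist (y' i) (y i) < \<delta>}) (principal {y'. \<forall>i\<in>{1..T}. dist (y' i) (y i) < \<delta>'})"
    by (intro bexI[of _ "min \<delta> \<delta>'"]) auto
qed (auto simp: eventually_principal)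

lemma tendsto_coordwise_nhds_iff:
  "(F \<longlongrightarrow> l) (coordwise_nhds T y) \<longleftrightarrow>
     (\<forall>\<epsilon>>0. \<exists>\<delta>>0. \<forall>y'. (\<forall>i\<in>{1..T}. dist (y' i) (y i) < \<delta>) \<longrightarrow> dist (F y') l < \<epsilon>)"
  unfolding tendsto_iff eventually_coordwise_nhds ..

lemma tendsto_coordinate_coordwise_nhds:
  "i \<in> {1..T} \<Longrightarrow> ((\<lambda>y'. y' i) \<longlongrightarrow> y i) (coordwise_nhds T y)"
  unfolding tendsto_coordwise_nhds_iff by blast

lemma tendsto_continuous_on_compose2:
  assumes "continuous_on UNIV (\<lambda>(x, v). g x v)" "(X \<longlongrightarrow> x) F" "(V \<longlongrightarrow> v) F"
  shows "((\<lambda>w. g (X w) (V w)) \<longlongrightarrow> g x v) F"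
  using continuous_on_tendsto_compose[OF assms(1) tendsto_Pair[OF assms(2,3)]] by simp

lemma tendsto_arcs_of_flows:
  fixes g :: "'x::topological_space \<Rightarrow> 'y::metric_space \<Rightarrow> 'x"
  assumes flow_cont: "\<And>k s. k < T \<Longrightarrow> s \<in> {real k..real k + 1} \<Longrightarrow> continuous_on UNIV (\<lambda>z. \<phi> k z s)"
    and g_cont: "continuous_on UNIV (\<lambda>(x, v). g x v)"
    and "k < T" "s \<in> {real k..real k + 1}"
  shows "((\<lambda>y'. arcs_of_flows \<phi> g \<xi> y' k s) \<longlongrightarrow> arcs_of_flows \<phi> g \<xi> y k s) (coordwise_nhds T y)"
  using assms(3,4)
proof (induction k arbitrary: s)
  case 0
  then show ?case
    by simp
next
  case (Suc k)
  have "((\<lambda>y'. arcs_of_flows \<phi> g \<xi> y' k (Suc k)) \<longlongrightarrow> arcs_of_flows \<phi> g \<xi> y k (Suc k)) (coordwise_nhds T y)"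
    using Suc by simp
  moreover have "((\<lambda>y'. y' (Suc k)) \<longlongrightarrow> y (Suc k)) (coordwise_nhds T y)"
    using Suc.prems(1) by (intro tendsto_coordinate_coordwise_nhds) simp
  ultimately have "((\<lambda>y'. g (arcs_of_flows \<phi> g \<xi> y' k (Suc k)) (y' (Suc k))) \<longlongrightarrow>
      g (arcs_of_flows \<phi> g \<xi> y k (Suc k)) (y (Suc k))) (coordwise_nhds T y)"
    by (rule tendsto_continuous_on_compose2[OF g_cont])
  then show ?case
    using continuous_on_tendsto_compose[OF flow_cont[OF Suc.prems]] by simp
qed

lemma tendsto_hybrid_state_of_arcs_of_flows:
  assumes flow_cont: "\<And>k s. k < T \<Longrightarrow> s \<in> {real k..real k + 1} \<Longrightarrow> continuous_on UNIV (\<lambda>z. \<phi> k z s)"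
    and g_cont: "continuous_on UNIV (\<lambda>(x, v). g x v)"
    and "0 < T" "t \<in> {0..real T}"
  shows "((\<lambda>y'. hybrid_state_of g T y' (\<lambda>i. arcs_of_flows \<phi> g \<xi> y' (i - 1)) t) \<longlongrightarrow>
      hybrid_state_of g T y (\<lambda>i. arcs_of_flows \<phi> g \<xi> y (i - 1)) t) (coordwise_nhds T y)"
proof (cases "t = real T")
  case True
  obtain m where T: "T = Suc m"
    using \<open>0 < T\<close> gr0_implies_Suc by blast
  have "((\<lambda>y'. arcs_of_flows \<phi> g \<xi> y' m T) \<longlongrightarrow> arcs_of_flows \<phi> g \<xi> y m T) (coordwise_nhds T y)"
    using tendsto_arcs_of_flows[OF flow_cont g_cont, where k = m and s = "real T"] by (simp add: T)
  moreover have "((\<lambda>y'. y' T) \<longlongrightarrow> y T) (coordwise_nhds T y)"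
    using \<open>0 < T\<close> by (intro tendsto_coordinate_coordwise_nhds) simp
  ultimately show ?thesis
    using tendsto_continuous_on_compose2[OF g_cont] True by (simp add: hybrid_state_of_def T)
next
  case False
  define k where "k = nat \<lfloor>t\<rfloor>"
  have k: "k < T" "t \<in> {real k..real k + 1}"
    using floor_interval_index[of t T] False \<open>t \<in> {0..real T}\<close> by (auto simp: k_def)
  show ?thesis
    using tendsto_arcs_of_flows[OF flow_cont g_cont k] False
    by (simp add: hybrid_state_of_def k_def)
qed

theorem proposition5:
  fixes T :: nat and \<rho> :: real and K1 K2 K3 K4 K5 :: real and L1 L2 :: nat
    and f :: "real^'nx \<Rightarrow> real^'m \<Rightarrow> real^'nx"
    and g :: "real^'nx \<Rightarrow> real^'ny \<Rightarrow> real^'nx"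
    and x0 :: "real^'nx" and u :: "real \<Rightarrow> real^'m" and t :: real
  assumes T_pos: "T > 0"
    and rho_pos: "\<rho> > 0"
    and f_C1: "\<exists>f'. (\<forall>z. ((\<lambda>(x, v). f x v) has_derivative blinfun_apply (f' z)) (at z))
                    \<and> continuous_on UNIV f'"
    and K1: "K1 \<ge> 1"
    and f_lip: "\<forall>x' x'' u' u''. norm u' \<le> \<rho> \<longrightarrow> norm u'' \<le> \<rho> \<longrightarrow>
                  norm (f x' u' - f x'' u'') \<le> K1 * (norm (x' - x'') + norm (u' - u''))"
    and g_cont: "continuous_on UNIV (\<lambda>(x, y). g x y)"
    and K_nonneg: "K2 \<ge> 0" "K3 \<ge> 0" "K4 \<ge> 0" "K5 \<ge> 0"
    and L_pos: "L1 > 0" "L2 > 0"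
    and g_bounds: "\<exists>g'. \<forall>x y.
          ((\<lambda>\<xi>. g \<xi> y) has_derivative blinfun_apply (g' x y)) (at x) \<and>
          norm (g x y) \<le> K2 + K3 * norm x ^ L1 + K4 * norm y ^ L2 + K5 * norm x ^ L1 * norm y ^ L2 \<and>
          norm (g' x y) \<le> K2 + K3 * norm x ^ L1 + K4 * norm y ^ L2 + K5 * norm x ^ L1 * norm y ^ L2"
    and u_adm: "u \<in> admissible_controls T \<rho>"
    and t_in: "t \<in> {0..real T}"
  shows "\<forall>y. \<forall>\<epsilon>>0. \<exists>\<delta>>0. \<forall>y'. (\<forall>i\<in>{1..T}. dist (y' i) (y i) < \<delta>) \<longrightarrow>
            dist (hybrid_solution f g T x0 u y' t) (hybrid_solution f g T x0 u y t) < \<epsilon>"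
proof (rule allI)
  fix y :: "nat \<Rightarrow> real^'ny"
  have f_cont: "continuous_on UNIV (\<lambda>(x, v). f x v)"
    using f_C1 by (meson has_derivative_continuous continuous_at_imp_continuous_on)
  have f_lip_state: "dist (f x v) (f x' v) \<le> K1 * dist x x'" if "norm v \<le> \<rho>" for x x' v
    using f_lip[rule_format, OF that that, of x x'] by (simp add: dist_norm)
  have ode: "lipschitz_caratheodory_ode f u (real k) (real k + 1) K1" if "k < T" for k
    using K1 that
    by (intro lipschitz_caratheodory_ode_admissible[OF f_cont _ f_lip_state u_adm]) auto
  define \<phi> where "\<phi> k = lipschitz_caratheodory_ode.flow f u (real k) (real k + 1) K1" for k
  have flows: "\<forall>k<T. caratheodory_flow f u (real k) (real k + 1) (\<phi> k)"
    using lipschitz_caratheodory_ode.caratheodory_flow_flow[OF ode] by (simp add: \<phi>_def)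
  have flow_cont: "continuous_on UNIV (\<lambda>z. \<phi> k z s)"
    if "k < T" "s \<in> {real k..real k + 1}" for k s
    unfolding \<phi>_def using lipschitz_caratheodory_ode.lipschitz_on_flow[OF ode[OF that(1)] that(2)]
    by (rule lipschitz_on_continuous_on)
  have "((\<lambda>y'. hybrid_solution f g T x0 u y' t) \<longlongrightarrow> hybrid_solution f g T x0 u y t) (coordwise_nhds T y)"
    unfolding hybrid_solution_eq_arcs_of_flows[OF T_pos t_in flows]
    by (rule tendsto_hybrid_state_of_arcs_of_flows[OF flow_cont g_cont T_pos t_in])
  then show "\<forall>\<epsilon>>0. \<exists>\<delta>>0. \<forall>y'. (\<forall>i\<in>{1..T}. dist (y' i) (y i) < \<delta>) \<longrightarrow>
      dist (hybrid_solution f g T x0 u y' t) (hybrid_solution f g T x0 u y t) < \<epsilon>"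
    unfolding tendsto_coordwise_nhds_iff .
qed

end
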